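(* For every integer $n\geq 0$, $$M_n=\sum_{k=0}^{n}(-1)^{n-k}\binom{n}{k}C_{k+1}=\sum_{k=0}^{n}(-1)^{k}3^{n-k}\binom{n}{k}C_{k+1}=\frac{1}{(\sqrt2)^{n+2}}\sum_{k=0}^{n}(\sqrt2-3)^{n-k}\binom{n}{k}S_{k+1}=\frac{1}{(\sqrt2)^{n+2}}\sum_{k=0}^{n}(-1)^k(3+\sqrt2)^{n-k}\binom{n}{k}S_{k+1},$$ where $C_m$, $M_m$, $S_m$ are the Catalan, Motzkin and (large) Schröder numbers.
   Context: $C_m=\frac{1}{m+1}\binom{2m}{m}$ is the Catalan number; $M_m=\sum_{k=0}^{\lfloor m/2\rfloor}\binom{m}{2k}C_k$ is the Motzkin number; $S_m$ is the number of Schröder paths from $(0,0)$ to $(m,m)$ with steps $(0,1),(1,0),(1,1)$ never going below the line $y=x$, i.e. $S_m=\sum_{k=0}^{m}\binom{m+k}{2k}C_k$ (so $S_0=1,S_1=2,S_2=6,S_3=22,\dots$). *)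

theory Defs
  imports Complex_Main
begin

definition catalan :: "nat \<Rightarrow> real" where
  "catalan m = real ((2*m) choose m) / real (m + 1)"

definition motzkin :: "nat \<Rightarrow> real" where
  "motzkin m = (\<Sum>k=0..m div 2. real (m choose (2*k)) * catalan k)"

definition schroeder :: "nat \<Rightarrow> real" where
  "schroeder m = (\<Sum>k=0..m. real ((m + k) choose (2*k)) * catalan k)"

end

theory Submission
  imports Defs
begin

text \<open>
  Let T(a,b,n) = sum_i (n choose 2i) a^(n-2i) b^i C_i, the number of Motzkin paths of length n
  weighted by a per level step and b per up-step, so that M_n = T(1,1,n). The binomial transform
  with weight y sends T(a,b,-) to T(a+y,b,-), and T(ca, c^2 b, n) = c^n T(a,b,n); in particular
  (-1)^n T(a,b,n) = T(-a,b,n). Given Touchard's identity C_(n+1) = T(2,1,n) and its Schroeder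
  analogue S_(n+1) = 2 T(3,2,n), the first two sums become T(1,1,n) and the last two become
  2 T(sqrt 2, 2, n) = 2 (sqrt 2)^n M_n. Both identities are proved by induction: T(a,b,-) satisfies
  (k+4) T_(k+2) = a(2k+5) T_(k+1) + (4b - a^2)(k+1) T_k, obtained by telescoping the summands, and for
  (a,b) = (2,1) resp. (3,2) this is the recurrence of the Catalan resp. Schroeder numbers.
\<close>

lemma of_nat_Suc_choose_Suc:
  "real (Suc n choose Suc k) = real (Suc n) / real (Suc k) * real (n choose k)"
  using Suc_times_binomial_eq[of n k] by (simp add: field_simps flip: of_nat_mult)

lemma of_nat_choose_Suc:
  "real (n choose Suc k) = real (n choose k) * (real n - real k) / real (Suc k)"
  using of_nat_Suc_choose_Suc[of n k] by (simp add: field_simps)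

lemma binomial_double_Suc_Suc_ratios:
  fixes n p :: nat
  defines "d \<equiv> (2 * real p + 1) * (2 * real p + 2)"
  shows "real (n choose Suc (Suc (2*p)))
           = real (n choose (2*p)) * (real n - 2 * real p) * (real n - 2 * real p - 1) / d"
    and "real (Suc n choose Suc (Suc (2*p)))
           = real (n choose (2*p)) * (real n + 1) * (real n - 2 * real p) / d"
    and "real (Suc (Suc n) choose Suc (Suc (2*p)))
           = real (n choose (2*p)) * (real n + 2) * (real n + 1) / d"
proof -
  have d: "2 * real p + 1 \<noteq> 0" "2 * real p + 2 \<noteq> 0" by linarith+
  have one: "real (n choose Suc (2*p)) = real (n choose (2*p)) * (real n - 2 * real p) / (2 * real p + 1)"
    using of_nat_choose_Suc[of n "2*p"] by simp
  show "real (n choose Suc (Suc (2*p)))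
      = real (n choose (2*p)) * (real n - 2 * real p) * (real n - 2 * real p - 1) / d"
    using of_nat_choose_Suc[of n "Suc (2*p)"] d unfolding one d_def
    by (simp add: divide_simps) (simp add: algebra_simps)
  show "real (Suc n choose Suc (Suc (2*p)))
      = real (n choose (2*p)) * (real n + 1) * (real n - 2 * real p) / d"
    using of_nat_Suc_choose_Suc[of n "Suc (2*p)"] d unfolding one d_def
    by (simp del: binomial_Suc_Suc add: divide_simps) (simp add: algebra_simps)
  show "real (Suc (Suc n) choose Suc (Suc (2*p)))
      = real (n choose (2*p)) * (real n + 2) * (real n + 1) / d"
    using of_nat_Suc_choose_Suc[of "Suc n" "Suc (2*p)"] of_nat_Suc_choose_Suc[of n "2*p"] d
    unfolding d_def by (simp del: binomial_Suc_Suc add: divide_simps) (simp add: algebra_simps)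
qed

lemma sum_choose_mult_choose_powers:
  fixes a y :: real
  shows "(\<Sum>k=0..n. real (n choose k) * real (k choose m) * y ^ (n - k) * a ^ (k - m))
       = real (n choose m) * (a + y) ^ (n - m)"
proof (cases "m \<le> n")
  case False
  then show ?thesis by (intro trans[OF sum.neutral]) auto
next
  case True
  define f where "f k = real (n choose k) * real (k choose m) * y ^ (n - k) * a ^ (k - m)" for k
  have "(\<Sum>k=0..n. f k) = (\<Sum>k=m..n. f k)"
    by (rule sum.mono_neutral_right) (auto simp: f_def)
  also have "\<dots> = (\<Sum>t=0..n-m. f (t + m))"
    using sum.atLeastAtMost_shift_bounds[of f 0 m "n - m"] True by (simp add: comp_def add.commute)
  also have "\<dots> = (\<Sum>t=0..n-m. real (n choose m) * (real ((n - m) choose t) * a ^ t * y ^ (n - m - t)))"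
  proof (rule sum.cong)
    fix t assume "t \<in> {0..n-m}"
    then have "(n choose (t + m)) * ((t + m) choose m) = (n choose m) * ((n - m) choose t)"
      using choose_mult[of m "t + m" n] True by simp
    then show "f (t + m) = real (n choose m) * (real ((n - m) choose t) * a ^ t * y ^ (n - m - t))"
      unfolding f_def by (simp add: diff_diff_add add.commute flip: of_nat_mult)
  qed simp
  also have "\<dots> = real (n choose m) * (a + y) ^ (n - m)"
    by (simp add: binomial_ring atLeast0AtMost flip: sum_distrib_left)
  finally show ?thesis unfolding f_def .
qed

lemma catalan_Suc: "catalan (Suc p) = catalan p * (2 * (2 * real p + 1)) / (real p + 2)"
proof -
  have "Suc (2*p) choose Suc p = Suc (2*p) choose p"
    by (subst binomial_symmetric) auto
  then have "real (Suc (2*p) choose p) = real (Suc (2*p)) / real (Suc p) * real (2*p choose p)"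
    using of_nat_Suc_choose_Suc[of "2*p" p] by simp
  moreover have "real (2 * Suc p choose Suc p)
      = real (Suc (Suc (2*p))) / real (Suc p) * real (Suc (2*p) choose p)"
    using of_nat_Suc_choose_Suc[of "Suc (2*p)" p] by simp
  ultimately have central: "real (2 * Suc p choose Suc p)
      = 2 * (2 * real p + 1) / (real p + 1) * real (2*p choose p)"
    by (simp add: field_simps)
  have "catalan (Suc p) = real (2 * Suc p choose Suc p) / (real p + 2)"
    unfolding catalan_def by simp
  also have "\<dots> = 2 * (2 * real p + 1) / (real p + 1) * real (2*p choose p) / (real p + 2)"
    by (simp only: central)
  also have "\<dots> = catalan p * (2 * (2 * real p + 1)) / (real p + 2)"
    unfolding catalan_def by (simp add: ac_simps)
  finally show ?thesis .
qed

lemma weighted_motzkin_summand_relation: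
  fixes k p :: nat
  shows "(real k + 4) * real (Suc (Suc k) choose Suc (Suc (2*p))) * catalan (Suc p)
       - (2 * real k + 5) * real (Suc k choose Suc (Suc (2*p))) * catalan (Suc p)
       + (real k + 1) * real (k choose Suc (Suc (2*p))) * catalan (Suc p)
       = 4 * (real k + 1) * real (k choose (2*p)) * catalan p"
proof -
  have "2 * real p + 1 \<noteq> 0" "2 * real p + 2 \<noteq> 0" "real p + 2 \<noteq> 0" by linarith+
  then show ?thesis
    unfolding binomial_double_Suc_Suc_ratios[of k p] catalan_Suc
    by (simp add: divide_simps) (simp add: algebra_simps)
qed

lemma schroeder_summand_relation:
  fixes k p :: nat
  shows "(real k + 3) * real (k + p + 3 choose Suc (Suc (2*p))) * catalan (Suc p)
       - 3 * (2 * real k + 3) * real (k + p + 2 choose Suc (Suc (2*p))) * catalan (Suc p)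
       + real k * real (k + p + 1 choose Suc (Suc (2*p))) * catalan (Suc p)
       = (4 * real k + 6) * (real (k + p + 1 choose (2*p)) * catalan p
           - real (k + p + 2 choose Suc (Suc (2*p))) * catalan (Suc p))"
proof -
  have "2 * real p + 1 \<noteq> 0" "2 * real p + 2 \<noteq> 0" "real p + 2 \<noteq> 0" by linarith+
  moreover have shift: "k + p + 2 = Suc (k + p + 1)" "k + p + 3 = Suc (Suc (k + p + 1))"
    by simp_all
  ultimately show ?thesis
    unfolding shift binomial_double_Suc_Suc_ratios[of "k + p + 1" p] catalan_Suc
    by (simp add: divide_simps) (simp add: algebra_simps)
qed

text \<open>Choose the 2i positions of the up- and down-steps, then a Dyck word on them.\<close>
definition weighted_motzkin :: "real \<Rightarrow> real \<Rightarrow> nat \<Rightarrow> real" where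
  "weighted_motzkin a b n =
     (\<Sum>i=0..n div 2. real (n choose (2*i)) * a ^ (n - 2*i) * b ^ i * catalan i)"

lemma weighted_motzkin_eq_sum:
  assumes "n div 2 \<le> N"
  shows "weighted_motzkin a b n =
           (\<Sum>i=0..N. real (n choose (2*i)) * a ^ (n - 2*i) * b ^ i * catalan i)"
  unfolding weighted_motzkin_def using assms by (intro sum.mono_neutral_left) auto

lemma motzkin_eq_weighted_motzkin: "motzkin n = weighted_motzkin 1 1 n"
  by (simp add: motzkin_def weighted_motzkin_def)

lemma weighted_motzkin_scale:
  "weighted_motzkin (c * a) (c^2 * b) n = c ^ n * weighted_motzkin a b n"
  unfolding weighted_motzkin_def sum_distrib_left
proof (rule sum.cong)
  fix i assume "i \<in> {0..n div 2}"
  then have "c ^ (n - 2*i) * (c^2) ^ i = c ^ n"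
    by (simp add: power_mult[symmetric] power_add[symmetric])
  then show "real (n choose (2*i)) * (c * a) ^ (n - 2*i) * (c^2 * b) ^ i * catalan i
      = c ^ n * (real (n choose (2*i)) * a ^ (n - 2*i) * b ^ i * catalan i)"
    by (simp add: power_mult_distrib algebra_simps)
qed simp

lemma weighted_motzkin_uminus: "weighted_motzkin (- a) b n = (-1) ^ n * weighted_motzkin a b n"
  using weighted_motzkin_scale[of "-1" a b n] by simp

lemma weighted_motzkin_binomial_transform:
  "(\<Sum>k=0..n. real (n choose k) * y ^ (n - k) * weighted_motzkin a b k)
     = weighted_motzkin (a + y) b n"
proof -
  have "(\<Sum>k=0..n. real (n choose k) * y ^ (n - k) * weighted_motzkin a b k)
      = (\<Sum>k=0..n. \<Sum>i=0..n. b ^ i * catalan i *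
           (real (n choose k) * real (k choose (2*i)) * y ^ (n - k) * a ^ (k - 2*i)))"
  proof (rule sum.cong)
    fix k assume "k \<in> {0..n}"
    then show "real (n choose k) * y ^ (n - k) * weighted_motzkin a b k
        = (\<Sum>i=0..n. b ^ i * catalan i *
             (real (n choose k) * real (k choose (2*i)) * y ^ (n - k) * a ^ (k - 2*i)))"
      by (simp add: weighted_motzkin_eq_sum[of k n] sum_distrib_left algebra_simps)
  qed simp
  also have "\<dots> = (\<Sum>i=0..n. b ^ i * catalan i *
      (\<Sum>k=0..n. real (n choose k) * real (k choose (2*i)) * y ^ (n - k) * a ^ (k - 2*i)))"
    by (subst sum.swap) (simp add: sum_distrib_left)
  also have "\<dots> = weighted_motzkin (a + y) b n"
    unfolding sum_choose_mult_choose_powers weighted_motzkin_eq_sum[of n n, OF div_le_dividend]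
    by (simp add: ac_simps)
  finally show ?thesis .
qed

lemma weighted_motzkin_one_rec:
  "(real k + 4) * weighted_motzkin 1 b (k + 2)
     = (2 * real k + 5) * weighted_motzkin 1 b (k + 1)
       + (4 * b - 1) * (real k + 1) * weighted_motzkin 1 b k"
proof -
  define f where "f j i = real (j choose (2*i)) * b ^ i * catalan i" for j i
  \<comment> \<open>Zeilberger's certificate: the recurrence holds summand-wise up to the difference of G.\<close>
  define G where "G i = (case i of 0 \<Rightarrow> 0 | Suc p \<Rightarrow> - 4 * (real k + 1) * f k p * b)" for i
  have telescoping: "(real k + 4) * f (k + 2) i - (2 * real k + 5) * f (k + 1) i
      - (4 * b - 1) * (real k + 1) * f k i = G (Suc i) - G i" for i
  proof (cases i)
    case 0
    then show ?thesis by (simp add: f_def G_def catalan_def algebra_simps)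
  next
    case (Suc p)
    have "2 * Suc p = Suc (Suc (2*p))" by simp
    then show ?thesis
      using arg_cong[OF weighted_motzkin_summand_relation[of k p], of "\<lambda>x. x * b ^ Suc p"]
      unfolding f_def G_def Suc by (simp del: binomial_Suc_Suc add: algebra_simps)
  qed
  have W: "weighted_motzkin 1 b j = (\<Sum>i=0..k+2. f j i)" if "j \<le> k + 2" for j
    using that by (simp add: weighted_motzkin_eq_sum[of j "k + 2"] f_def)
  have "(\<Sum>i=0..k+2. (real k + 4) * f (k + 2) i - (2 * real k + 5) * f (k + 1) i
      - (4 * b - 1) * (real k + 1) * f k i) = G (Suc (k + 2)) - G 0"
    unfolding telescoping by (rule sum_Suc_diff) simp
  also have "\<dots> = 0" by (simp add: G_def f_def)
  finally show ?thesis
    by (simp add: W sum_subtractf flip: sum_distrib_left)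
qed

lemma weighted_motzkin_rec:
  assumes "a \<noteq> 0"
  shows "(real k + 4) * weighted_motzkin a b (k + 2)
     = a * (2 * real k + 5) * weighted_motzkin a b (k + 1)
       + (4 * b - a^2) * (real k + 1) * weighted_motzkin a b k"
proof -
  define c where "c = b / a^2"
  have W: "weighted_motzkin a b j = a ^ j * weighted_motzkin 1 c j" for j
    using weighted_motzkin_scale[of a 1 c j] assms by (simp add: c_def)
  have b: "4 * b - a^2 = a^2 * (4 * c - 1)"
    using assms by (simp add: c_def field_simps)
  have "(real k + 4) * weighted_motzkin a b (k + 2)
      = a ^ (k + 2) * ((real k + 4) * weighted_motzkin 1 c (k + 2))"
    by (simp add: W)
  also have "\<dots> = a ^ (k + 2) * ((2 * real k + 5) * weighted_motzkin 1 c (k + 1)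
                    + (4 * c - 1) * (real k + 1) * weighted_motzkin 1 c k)"
    by (simp only: weighted_motzkin_one_rec)
  also have "\<dots> = a * (2 * real k + 5) * weighted_motzkin a b (k + 1)
                 + (4 * b - a^2) * (real k + 1) * weighted_motzkin a b k"
    unfolding W b by (simp add: power_add power2_eq_square algebra_simps)
  finally show ?thesis .
qed

lemma catalan_Suc_eq_weighted_motzkin: "catalan (Suc n) = weighted_motzkin 2 1 n"
proof (induction n rule: induct_nat_012)
  case (ge2 k)
  have "real k + 4 \<noteq> 0" by linarith
  then have "(real k + 4) * catalan (Suc (Suc (Suc k)))
      = 2 * (2 * real k + 5) * catalan (Suc (Suc k))"
    using catalan_Suc[of "Suc (Suc k)"] by (simp add: field_simps)
  also have "\<dots> = (real k + 4) * weighted_motzkin 2 1 (Suc (Suc k))"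
    using weighted_motzkin_rec[of 2 k 1] ge2.IH(2) by simp
  finally show ?case
    using \<open>real k + 4 \<noteq> 0\<close> by simp
qed (simp_all add: catalan_def weighted_motzkin_def numeral_eq_Suc)

lemma schroeder_eq_sum:
  assumes "m \<le> N"
  shows "schroeder m = (\<Sum>i=0..N. real ((m + i) choose (2*i)) * catalan i)"
  unfolding schroeder_def using assms by (intro sum.mono_neutral_left) auto

lemma schroeder_rec:
  "(real k + 3) * schroeder (k + 2) = 3 * (2 * real k + 3) * schroeder (k + 1) - real k * schroeder k"
proof -
  define f where "f j i = real ((j + i) choose (2*i)) * catalan i" for j i
  define G where "G i = (case i of 0 \<Rightarrow> 0 | Suc p \<Rightarrow> - (4 * real k + 6) * f (Suc k) p)" for i
  have telescoping: "(real k + 3) * f (k + 2) i - 3 * (2 * real k + 3) * f (k + 1) i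
      + real k * f k i = G (Suc i) - G i" for i
  proof (cases i)
    case 0
    then show ?thesis by (simp add: f_def G_def catalan_def algebra_simps)
  next
    case (Suc p)
    have "f (k + 2) i = real (k + p + 3 choose Suc (Suc (2*p))) * catalan (Suc p)"
      "f (k + 1) i = real (k + p + 2 choose Suc (Suc (2*p))) * catalan (Suc p)"
      "f k i = real (k + p + 1 choose Suc (Suc (2*p))) * catalan (Suc p)"
      "G (Suc i) = - (4 * real k + 6) * real (k + p + 2 choose Suc (Suc (2*p))) * catalan (Suc p)"
      "G i = - (4 * real k + 6) * real (k + p + 1 choose (2*p)) * catalan p"
      unfolding f_def G_def Suc by (simp_all del: binomial_Suc_Suc add: ac_simps eval_nat_numeral)
    then show ?thesis
      using schroeder_summand_relation[of k p] by (simp add: algebra_simps)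
  qed
  have S: "schroeder j = (\<Sum>i=0..k+2. f j i)" if "j \<le> k + 2" for j
    using that by (simp add: schroeder_eq_sum[of j "k + 2"] f_def)
  have "(\<Sum>i=0..k+2. (real k + 3) * f (k + 2) i - 3 * (2 * real k + 3) * f (k + 1) i
      + real k * f k i) = G (Suc (k + 2)) - G 0"
    unfolding telescoping by (rule sum_Suc_diff) simp
  also have "\<dots> = 0" by (simp add: G_def f_def del: binomial_Suc_Suc)
  finally show ?thesis
    by (simp add: S sum.distrib sum_subtractf flip: sum_distrib_left)
qed

lemma schroeder_Suc_eq_weighted_motzkin: "schroeder (Suc n) = 2 * weighted_motzkin 3 2 n"
proof (induction n rule: induct_nat_012)
  case (ge2 k)
  have "(real k + 4) * schroeder (Suc (Suc (Suc k)))
      = 3 * (2 * real k + 5) * schroeder (Suc (Suc k)) - (real k + 1) * schroeder (Suc k)"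
    using schroeder_rec[of "k + 1"] by (simp add: algebra_simps eval_nat_numeral)
  also have "\<dots> = 2 * ((real k + 4) * weighted_motzkin 3 2 (Suc (Suc k)))"
    using weighted_motzkin_rec[of 3 k 2] ge2.IH by (simp add: algebra_simps)
  finally have "(real k + 4) * schroeder (Suc (Suc (Suc k)))
      = (real k + 4) * (2 * weighted_motzkin 3 2 (Suc (Suc k)))"
    by simp
  moreover have "real k + 4 \<noteq> 0" by linarith
  ultimately show ?case by simp
qed (simp_all add: catalan_def weighted_motzkin_def schroeder_def numeral_eq_Suc)

theorem proposition3p3:
  fixes n :: nat
  shows "motzkin n = (\<Sum>k=0..n. (-1) ^ (n - k) * real (n choose k) * catalan (k + 1))
       \<and> motzkin n = (\<Sum>k=0..n. (-1) ^ k * 3 ^ (n - k) * real (n choose k) * catalan (k + 1))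
       \<and> motzkin n = (1 / sqrt 2 ^ (n + 2)) *
            (\<Sum>k=0..n. (sqrt 2 - 3) ^ (n - k) * real (n choose k) * schroeder (k + 1))
       \<and> motzkin n = (1 / sqrt 2 ^ (n + 2)) *
            (\<Sum>k=0..n. (-1) ^ k * (3 + sqrt 2) ^ (n - k) * real (n choose k) * schroeder (k + 1))"
proof -
  note transform = weighted_motzkin_binomial_transform[symmetric]
  have C: "catalan (k + 1) = weighted_motzkin 2 1 k" for k
    using catalan_Suc_eq_weighted_motzkin by simp
  have S: "schroeder (k + 1) = 2 * weighted_motzkin 3 2 k" for k
    using schroeder_Suc_eq_weighted_motzkin by simp
  have "(\<Sum>k=0..n. (-1) ^ (n - k) * real (n choose k) * catalan (k + 1))
      = weighted_motzkin (2 + -1) 1 n"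
    unfolding C transform by (simp add: ac_simps)
  moreover have "(\<Sum>k=0..n. (-1) ^ k * 3 ^ (n - k) * real (n choose k) * catalan (k + 1))
      = weighted_motzkin (-2 + 3) 1 n"
    unfolding C transform weighted_motzkin_uminus by (simp add: ac_simps)
  moreover have "(\<Sum>k=0..n. (sqrt 2 - 3) ^ (n - k) * real (n choose k) * schroeder (k + 1))
      = 2 * weighted_motzkin (3 + (sqrt 2 - 3)) 2 n"
    unfolding S transform by (simp add: sum_distrib_left ac_simps)
  moreover have "(\<Sum>k=0..n. (-1) ^ k * (3 + sqrt 2) ^ (n - k) * real (n choose k) * schroeder (k + 1))
      = 2 * weighted_motzkin (-3 + (3 + sqrt 2)) 2 n"
    unfolding S transform weighted_motzkin_uminus by (simp add: sum_distrib_left ac_simps)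
  moreover have "weighted_motzkin (sqrt 2) 2 n = sqrt 2 ^ n * motzkin n"
    using weighted_motzkin_scale[of "sqrt 2" 1 1 n] by (simp add: motzkin_eq_weighted_motzkin)
  ultimately show ?thesis
    by (simp add: motzkin_eq_weighted_motzkin power_add)
qed

end
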